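(* For $n\ge1$ let $u_n=\frac{1}{2n}\left(1-\frac{1}{2n}\right)^{2n-1}$ and $v_n=\frac{1}{2n+1}\left(1-\frac{1}{2n+1}\right)^{2n+1}$. Then for all $n\ge1$, $$\sum_{i=1}^n (2i-1)^{2i-1}u_n^{2i-1}<1\qquad\text{and}\qquad \sum_{i=1}^n (2i)^{2i+1}v_n^{2i-1}<1.$$ *)

theory Defs
  imports Complex_Main
begin

end

theory Submission
  imports Defs
begin

text \<open>
  Odd sum: with \<open>c = (1 - 1/(2n))\<^bsup>2n-1\<^esup> \<le> 1/2\<close> the \<open>i\<close>-th term is
  \<open>((2i-1)/(2n) \<cdot> c)\<^bsup>2i-1\<^esup> \<le> (1/2)\<^bsup>2i-1\<^esup> \<le> (1/2)\<^bsup>i\<^esup>\<close>, and these sum to less than 1.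

  Even sum: with \<open>M = 2n+1\<close> and \<open>d = (1 - 1/M)\<^bsup>M\<^esup> \<le> e\<^sup>-\<^sup>1 \<le> 3/8\<close> the \<open>i\<close>-th term is
  \<open>k\<^sup>2 (k d / M)\<^bsup>2i-1\<^esup> \<le> k\<^sup>3 (3/8)\<^bsup>2i-1\<^esup> / M\<close> with \<open>k = 2i \<le> M\<close>, and the series
  \<open>\<Sum> (2i)\<^sup>3 (3/8)\<^bsup>2i-1\<^esup>\<close> (summed in closed form by telescoping) is below 9, so
  the sum is below \<open>9/M \<le> 1\<close> once \<open>n \<ge> 4\<close>; the cases \<open>n \<le> 3\<close> are computed.
\<close>

lemma exp_minus_one_le: "exp (-1::real) \<le> 3/8"
proof -
  have "(1 + 1/40::real) ^ 40 \<le> exp (1/40) ^ 40"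
    using exp_ge_add_one_self[of "1/40::real"] by (intro power_mono) auto
  also have "\<dots> = exp 1"
    by (simp flip: exp_of_nat_mult)
  finally have "(8/3::real) \<le> exp 1"
    by (simp add: power_divide)
  then show ?thesis
    by (simp add: exp_minus field_simps)
qed

lemma one_minus_inverse_power_le_3_8:
  assumes "M \<ge> (1::nat)"
  shows "(1 - 1 / real M) ^ M \<le> (3/8::real)"
proof -
  have "(1 - 1 / real M) ^ M \<le> exp (- 1 / real M) ^ M"
    using exp_ge_add_one_self[of "- 1 / real M"] assms
    by (intro power_mono) (auto simp: field_simps)
  also have "\<dots> = exp (-1)"
    using assms by (simp flip: exp_of_nat_mult)
  finally show ?thesis
    using exp_minus_one_le by linarith
qed

lemma one_minus_inverse_power_pred_le_half:
  assumes "m \<ge> (2::nat)"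
  shows "(1 - 1 / real m) ^ (m - 1) \<le> (1/2::real)"
proof -
  define N where "N = m - 1"
  have N: "real N > 0" "real N \<ge> 1" "real m = real N + 1"
    using assms by (auto simp: N_def)
  have "0 \<le> 1 / real N"
    by simp
  then have "- 1 \<le> 1 / real N"
    by linarith
  then have "2 \<le> (1 + 1 / real N) ^ N"
    using Bernoulli_inequality[of "1 / real N" N] N by simp
  moreover have "(1 - 1 / real m) * (1 + 1 / real N) = (real N / real m) * (real m / real N)"
    using N by (simp add: field_simps)
  then have "(1 - 1 / real m) * (1 + 1 / real N) = 1"
    using N by simp
  then have "(1 - 1 / real m) ^ N * (1 + 1 / real N) ^ N = 1"
    by (metis power_mult_distrib power_one)
  moreover have "(1 - 1 / real m) ^ N \<ge> 0"
    using N by simp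
  ultimately have "(1 - 1 / real m) ^ N * 2 \<le> 1"
    by (metis mult_left_mono)
  then show ?thesis
    unfolding N_def by simp
qed

lemma sum_power_half_atLeast1: "(\<Sum>i = 1..n. (1/2::real) ^ i) = 1 - (1/2) ^ n"
  by (induction n) (auto simp: field_simps)

text \<open>The cubic \<open>P\<close> is the polynomial solution of \<open>P x - (9/64) P (x + 1) = 8 x\<^sup>3\<close>,
  which makes the sum below telescope.\<close>

definition cube_sum_potential :: "real \<Rightarrow> real" where
  "cube_sum_potential x =
     512/55 * x^3 + 13824/3025 * x^2 + 1009152/166375 * x + 29864448/9150625"

lemma sum_cube_power_3_8:
  "(\<Sum>i = 1..n. (2 * real i) ^ 3 * (3/8::real) ^ (2*i - 1))
     = 3/8 * cube_sum_potential 1 - (3/8) ^ (2*n + 1) * cube_sum_potential (real n + 1)"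
proof (induction n)
  case 0
  then show ?case by (simp add: cube_sum_potential_def)
next
  case (Suc n)
  let ?P = cube_sum_potential and ?q = "(3/8::real) ^ (2*n + 1)"
  have step: "?P (real n + 1) - 9/64 * ?P (real n + 2) = 8 * (real n + 1) ^ 3"
    unfolding cube_sum_potential_def by (simp add: field_simps power2_eq_square power3_eq_cube)
  have "(\<Sum>i = 1..Suc n. (2 * real i) ^ 3 * (3/8::real) ^ (2*i - 1))
      = (\<Sum>i = 1..n. (2 * real i) ^ 3 * (3/8::real) ^ (2*i - 1)) + 8 * (real n + 1) ^ 3 * ?q"
    by (simp add: add.commute)
  also have "\<dots> = 3/8 * ?P 1 - ?q * (?P (real n + 1) - 8 * (real n + 1) ^ 3)"
    by (simp only: Suc.IH) (simp add: right_diff_distrib)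
  also have "\<dots> = 3/8 * ?P 1 - ?q * (9/64) * ?P (real n + 2)"
    using step by simp
  also have "\<dots> = 3/8 * ?P 1 - (3/8) ^ (2 * Suc n + 1) * ?P (real (Suc n) + 1)"
    by (simp add: power2_eq_square add.commute)
  finally show ?case .
qed

lemma sum_cube_power_3_8_lt_9: "(\<Sum>i = 1..n. (2 * real i) ^ 3 * (3/8::real) ^ (2*i - 1)) < 9"
proof -
  have "(3/8) ^ (2*n + 1) * cube_sum_potential (real n + 1) \<ge> 0"
    by (simp add: cube_sum_potential_def)
  moreover have "3/8 * cube_sum_potential 1 < 9"
    by (simp add: cube_sum_potential_def)
  ultimately show ?thesis
    unfolding sum_cube_power_3_8 by linarith
qed

lemma odd_power_sum_lt_one:
  assumes "n \<ge> 1"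
  defines "u \<equiv> (1 / (2 * real n)) * (1 - 1 / (2 * real n)) ^ (2 * n - 1)"
  shows "(\<Sum>i = 1..n. real (2 * i - 1) ^ (2 * i - 1) * u ^ (2 * i - 1)) < 1"
proof -
  define c where "c = (1 - 1 / (2 * real n)) ^ (2 * n - 1)"
  have c: "0 \<le> c" "c \<le> 1/2"
    using one_minus_inverse_power_pred_le_half[of "2 * n"] assms by (auto simp: c_def)
  have "(\<Sum>i = 1..n. real (2 * i - 1) ^ (2 * i - 1) * u ^ (2 * i - 1)) \<le> (\<Sum>i = 1..n. (1/2::real) ^ i)"
  proof (rule sum_mono)
    fix i assume i: "i \<in> {1..n}"
    define r where "r = real (2 * i - 1) / (2 * real n)"
    have r: "0 \<le> r" "r \<le> 1"
      using i by (auto simp: r_def)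
    have "real (2 * i - 1) * u = r * c"
      by (simp add: u_def r_def c_def)
    moreover have "0 \<le> r * c" "r * c \<le> 1/2"
      using r c mult_mono[OF r(2) c(2)] by auto
    ultimately have "(real (2 * i - 1) * u) ^ (2 * i - 1) \<le> (1/2) ^ (2 * i - 1)"
      by (simp add: power_mono)
    also have "\<dots> \<le> (1/2) ^ i"
      using i by (intro power_decreasing) auto
    finally show "real (2 * i - 1) ^ (2 * i - 1) * u ^ (2 * i - 1) \<le> (1/2) ^ i"
      by (simp add: power_mult_distrib)
  qed
  also have "\<dots> < 1"
    unfolding sum_power_half_atLeast1 by simp
  finally show ?thesis .
qed

lemma even_power_sum_lt_one_large:
  assumes "n \<ge> 4"
  defines "v \<equiv> (1 / (2 * real n + 1)) * (1 - 1 / (2 * real n + 1)) ^ (2 * n + 1)"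
  shows "(\<Sum>i = 1..n. real (2 * i) ^ (2 * i + 1) * v ^ (2 * i - 1)) < 1"
proof -
  define M where "M = 2 * real n + 1"
  define d where "d = (1 - 1 / M) ^ (2 * n + 1)"
  have v: "v = d / M"
    by (simp add: v_def d_def M_def)
  have M: "M \<ge> 9"
    using assms by (simp add: M_def)
  have d: "0 \<le> d" "d \<le> 3/8"
    using one_minus_inverse_power_le_3_8[of "2 * n + 1"] M by (auto simp: d_def M_def add.commute)
  have "(\<Sum>i = 1..n. real (2 * i) ^ (2 * i + 1) * v ^ (2 * i - 1))
      \<le> (\<Sum>i = 1..n. (2 * real i) ^ 3 * (3/8::real) ^ (2 * i - 1) / M)"
  proof (rule sum_mono)
    fix i assume i: "i \<in> {1..n}"
    define k where "k = 2 * real i"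
    define j where "j = 2 * i - 1"
    have j: "j \<ge> 1" "2 * i + 1 = j + 2"
      using i by (auto simp: j_def)
    have r: "0 \<le> k / M" "k / M \<le> 1"
      using i M by (auto simp: k_def M_def)
    have "(k / M) ^ j = k / M * (k / M) ^ (j - 1)"
      using j by (simp flip: power_Suc)
    also have "\<dots> \<le> k / M"
      using mult_left_le[OF power_le_one[OF r] r(1)] .
    finally have le: "(k / M) ^ j * d ^ j \<le> k / M * (3/8) ^ j"
      using d r by (intro mult_mono power_mono) auto
    have "real (2 * i) ^ (2 * i + 1) * v ^ (2 * i - 1) = k ^ 2 * ((k / M) ^ j * d ^ j)"
      unfolding j(2) v k_def j_def[symmetric]
      by (simp add: power_add power_divide field_simps power2_eq_square)
    also have "\<dots> \<le> k ^ 2 * (k / M * (3/8) ^ j)"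
      using le by (rule mult_left_mono) simp
    also have "\<dots> = (2 * real i) ^ 3 * (3/8) ^ (2 * i - 1) / M"
      by (simp add: k_def j_def power3_eq_cube power2_eq_square)
    finally show "real (2 * i) ^ (2 * i + 1) * v ^ (2 * i - 1)
        \<le> (2 * real i) ^ 3 * (3/8) ^ (2 * i - 1) / M" .
  qed
  also have "\<dots> = (\<Sum>i = 1..n. (2 * real i) ^ 3 * (3/8::real) ^ (2 * i - 1)) / M"
    by (simp add: sum_divide_distrib)
  also have "\<dots> < 1"
    using sum_cube_power_3_8_lt_9[of n] M by simp
  finally show ?thesis .
qed

lemma even_power_sum_lt_one_small:
  assumes "n \<in> {1, 2, 3}"
  defines "v \<equiv> (1 / (2 * real n + 1)) * (1 - 1 / (2 * real n + 1)) ^ (2 * n + 1)"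
  shows "(\<Sum>i = 1..n. real (2 * i) ^ (2 * i + 1) * v ^ (2 * i - 1)) < 1"
  using assms by (auto simp: numeral_eq_Suc power_divide)

theorem lemma8p5:
  fixes n :: nat
  assumes "n \<ge> 1"
  defines "u \<equiv> (1 / (2 * real n)) * (1 - 1 / (2 * real n)) ^ (2 * n - 1)"
      and "v \<equiv> (1 / (2 * real n + 1)) * (1 - 1 / (2 * real n + 1)) ^ (2 * n + 1)"
  shows "(\<Sum>i = 1..n. real (2 * i - 1) ^ (2 * i - 1) * u ^ (2 * i - 1)) < 1
       \<and> (\<Sum>i = 1..n. real (2 * i) ^ (2 * i + 1) * v ^ (2 * i - 1)) < 1"
proof
  show "(\<Sum>i = 1..n. real (2 * i - 1) ^ (2 * i - 1) * u ^ (2 * i - 1)) < 1"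
    using odd_power_sum_lt_one[OF assms(1)] by (simp add: u_def)
  show "(\<Sum>i = 1..n. real (2 * i) ^ (2 * i + 1) * v ^ (2 * i - 1)) < 1"
  proof (cases "n \<ge> 4")
    case True
    then show ?thesis using even_power_sum_lt_one_large by (simp add: v_def)
  next
    case False
    then have "n \<in> {1, 2, 3}" using assms(1) by auto
    then show ?thesis using even_power_sum_lt_one_small by (simp add: v_def)
  qed
qed

end
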